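(* Let $b\in\mathbb{N}_{>0}$, $\mathbf{x}=(x_1,\dots,x_b)\in\{0,1\}^b$ and $\gamma_{\mathbf{x}}=\sum_{k=1}^{b}\frac{x_k}{4^k}$. Then $\gamma_{\mathbf{x}}\in[0,\tfrac13]$, and for every integer $j>0$: if $j>b$ then $\sin\!\big(4^j\tfrac{\pi}{2}\gamma_{\mathbf{x}}\big)=0$; if $j\leq b$ and $x_j=1$ then $\sin\!\big(4^j\tfrac{\pi}{2}\gamma_{\mathbf{x}}\big)\geq\tfrac23$; and if $j\leq b$ and $x_j=0$ then $\sin\!\big(4^j\tfrac{\pi}{2}\gamma_{\mathbf{x}}\big)\leq\tfrac12$. *)

theory Defs
  imports Complex_Main
begin

end

theory Submission
  imports Defs
begin

text \<open>
  Multiplying \<open>\<gamma>\<close> by \<open>4^j\<close> shifts its base-4 expansion: the digits before position \<open>j\<close>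
  become a multiple of 4, which is invisible to \<open>sin (\<pi>/2 \<cdot> _)\<close>, the digit \<open>x\<^sub>j\<close> stays
  a unit, and the remaining digits form a tail \<open>t \<in> [0, 1/3]\<close>. Hence the sine equals
  \<open>sin (\<pi> t/2) \<le> sin (\<pi>/6) = 1/2\<close> if \<open>x\<^sub>j = 0\<close> and \<open>cos (\<pi> t/2) \<ge> cos (\<pi>/6) = \<surd>3/2 > 2/3\<close>
  if \<open>x\<^sub>j = 1\<close>; for \<open>j > b\<close> there are no digits left and the sine vanishes.
\<close>

lemma sum_unit_digits_base4_le:
  fixes a :: "nat \<Rightarrow> real"
  assumes "j \<le> b" and "\<And>k. k \<in> {j<..b} \<Longrightarrow> 0 \<le> a k \<and> a k \<le> 1"
  shows "(\<Sum>k\<in>{j<..b}. a k / 4 ^ k) \<le> (1 / 4 ^ j - 1 / 4 ^ b) / 3"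
  using assms
proof (induction b rule: dec_induct)
  case base
  then show ?case by simp
next
  case (step n)
  have "a (Suc n) / 4 ^ Suc n \<le> 1 / 4 ^ Suc n"
    using step.prems[of "Suc n"] step.hyps by (simp add: divide_right_mono)
  moreover have "(\<Sum>k\<in>{j<..n}. a k / 4 ^ k) \<le> (1 / 4 ^ j - 1 / 4 ^ n) / 3"
    using step.IH step.prems by simp
  moreover have "{j<..Suc n} = insert (Suc n) {j<..n}"
    using step.hyps by auto
  ultimately show ?case by simp
qed

lemma scaled_tail_unit_digits_base4_le:
  fixes a :: "nat \<Rightarrow> real"
  assumes "\<And>k. k \<in> {j<..b} \<Longrightarrow> 0 \<le> a k \<and> a k \<le> 1"
  shows "4 ^ j * (\<Sum>k\<in>{j<..b}. a k / 4 ^ k) \<le> 1 / 3"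
proof (cases "j \<le> b")
  case True
  have "4 ^ j * (\<Sum>k\<in>{j<..b}. a k / 4 ^ k) \<le> 4 ^ j * ((1 / 4 ^ j - 1 / 4 ^ b) / 3)"
    using sum_unit_digits_base4_le[OF True assms] by (simp add: mult_left_mono)
  also have "\<dots> \<le> 1 / 3"
    by (simp add: field_simps)
  finally show ?thesis .
qed simp

lemma power4_div_power4:
  assumes "k < j"
  shows "(4::real) ^ j / 4 ^ k = 4 * 4 ^ (j - Suc k)"
proof -
  obtain d where "j = Suc k + d"
    using assms less_iff_Suc_add by blast
  then show ?thesis by (simp add: power_add)
qed

lemma scaled_base4_sum_split:
  fixes x :: "nat \<Rightarrow> nat"
  assumes "0 < j"
  shows "\<exists>N::nat. 4 ^ j * (\<Sum>k=1..b. real (x k) / 4 ^ k) =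
    4 * real N + (if j \<le> b then real (x j) else 0) + 4 ^ j * (\<Sum>k\<in>{j<..b}. real (x k) / 4 ^ k)"
proof -
  define N where "N = (\<Sum>k\<in>{1..b} \<inter> {..<j}. x k * 4 ^ (j - Suc k))"
  have head: "4 ^ j * (\<Sum>k\<in>{1..b} \<inter> {..<j}. real (x k) / 4 ^ k) = 4 * real N"
    unfolding N_def of_nat_sum sum_distrib_left
    by (intro sum.cong refl) (simp add: power4_div_power4 flip: times_divide_eq_left)
  have upper: "{1..b} - {..<j} = (if j \<le> b then insert j {j<..b} else {})"
    using assms by auto
  have "(\<Sum>k=1..b. real (x k) / 4 ^ k) =
      (\<Sum>k\<in>{1..b} \<inter> {..<j}. real (x k) / 4 ^ k) + (\<Sum>k\<in>{1..b} - {..<j}. real (x k) / 4 ^ k)"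
    by (rule sum.Int_Diff) simp
  then show ?thesis
    using head unfolding upper by (auto simp: distrib_left)
qed

lemma sin_add_2npi: "sin (2 * real n * pi + y) = sin y"
  by (simp add: sin_add)

lemma sin_half_pi_le_half:
  assumes "0 \<le> t" "t \<le> 1/3"
  shows "sin (pi / 2 * t) \<le> 1 / 2"
proof -
  have "sin (pi / 2 * t) \<le> sin (pi / 6)"
  proof (rule sin_monotone_2pi_le)
    show "- (pi / 2) \<le> pi / 2 * t"
      using assms pi_gt_zero mult_nonneg_nonneg[of "pi / 2" t] by linarith
    show "pi / 2 * t \<le> pi / 6"
      using assms pi_gt_zero by simp
  qed simp
  then show ?thesis by (simp add: sin_30)
qed

lemma sin_half_pi_one_plus_ge_two_thirds:
  assumes "0 \<le> t" "t \<le> 1/3"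
  shows "2 / 3 \<le> sin (pi / 2 * (1 + t))"
proof -
  have "(4/3::real) \<le> sqrt 3"
    by (rule real_le_rsqrt) (simp add: power2_eq_square)
  also have "sqrt 3 = 2 * cos (pi / 6)"
    by (simp add: cos_30)
  also have "cos (pi / 6) \<le> cos (pi / 2 * t)"
    using assms pi_gt_zero by (intro cos_monotone_0_pi_le) auto
  also have "cos (pi / 2 * t) = sin (pi / 2 * (1 + t))"
    by (simp add: distrib_left sin_add)
  finally show ?thesis by simp
qed

theorem lemma1:
  fixes b :: nat and x :: "nat \<Rightarrow> nat" and \<gamma> :: real
  assumes "b > 0"
    and "\<forall>k\<in>{1..b}. x k \<in> {0, 1}"
    and "\<gamma> = (\<Sum>k=1..b. real (x k) / 4 ^ k)"
  shows "\<gamma> \<in> {0..1/3} \<and>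
    (\<forall>j::nat. j > 0 \<longrightarrow>
       (j > b \<longrightarrow> sin (4 ^ j * (pi / 2) * \<gamma>) = 0) \<and>
       (j \<le> b \<and> x j = 1 \<longrightarrow> sin (4 ^ j * (pi / 2) * \<gamma>) \<ge> 2/3) \<and>
       (j \<le> b \<and> x j = 0 \<longrightarrow> sin (4 ^ j * (pi / 2) * \<gamma>) \<le> 1/2))"
proof -
  define tail where "tail j = 4 ^ j * (\<Sum>k\<in>{j<..b}. real (x k) / 4 ^ k)" for j
  have unit_digits: "0 \<le> real (x k) \<and> real (x k) \<le> 1" if "k \<in> {j<..b}" for j k
  proof -
    have "k \<in> {1..b}"
      using that by auto
    then have "x k \<in> {0, 1}"
      using assms(2) by blast
    then show ?thesis
      by auto
  qed
  have tail_bounds: "0 \<le> tail j \<and> tail j \<le> 1/3" for j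
    unfolding tail_def using scaled_tail_unit_digits_base4_le[OF unit_digits]
    by (simp add: sum_nonneg)
  have "\<gamma> = tail 0"
    unfolding assms(3) tail_def by (simp flip: atLeastSucAtMost_greaterThanAtMost)
  then have "\<gamma> \<in> {0..1/3}"
    using tail_bounds by simp
  moreover have "sin (4 ^ j * (pi / 2) * \<gamma>) = sin (pi / 2 * (digit + tail j))"
    if j_pos: "0 < j" and digit: "digit = (if j \<le> b then real (x j) else 0)" for j digit
  proof -
    obtain N :: nat where N: "4 ^ j * \<gamma> = 4 * real N + digit + tail j"
      using scaled_base4_sum_split[OF j_pos] unfolding assms(3) tail_def digit by blast
    have "4 ^ j * (pi / 2) * \<gamma> = pi / 2 * (4 ^ j * \<gamma>)"
      by simp
    also have "\<dots> = 2 * real N * pi + pi / 2 * (digit + tail j)"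
      unfolding N by (simp add: algebra_simps)
    finally show ?thesis
      by (simp only: sin_add_2npi)
  qed
  moreover have "tail j = 0" if "b < j" for j
    using that by (simp add: tail_def)
  ultimately show ?thesis
    using tail_bounds sin_half_pi_le_half sin_half_pi_one_plus_ge_two_thirds by auto
qed

end
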